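(* Let $s\ge r$ be positive integers and let $Q$ be drawn from the uniform (Haar) measure on $V_r(\mathbb{R}^s)$. Then for any sets $S,U\subseteq[s]$ and $T,V\subseteq[r]$ with $|S|=|T|=i$ and $|U|=|V|=\ell$, \[ \mathbb{E}_Q\big[[Q]_{S,T}[Q]_{U,V}\big]=\frac{1}{\binom{s}{i}}\,\mathbf{1}[S=U]\,\mathbf{1}[T=V]. \]
   Context: $V_r(\mathbb{R}^s)$ (the Stiefel manifold) is the set of real $s\times r$ matrices with orthonormal columns, with its uniform (Haar) probability measure, invariant under left multiplication by $s\times s$ orthogonal matrices and right multiplication by $r\times r$ orthogonal matrices. For a matrix $C$ and index sets $S,T$ with $|S|=|T|$, $[C]_{S,T}=\det(\{C_{ij}\}_{i\in S,j\in T})$ is the $(S,T)$-minor. $[N]=\{1,\dots,N\}$. *)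

theory Defs
  imports "HOL-Probability.Probability"
begin

text \<open>Index types carry a linear order so that minors can be
  taken with rows/columns in increasing order, as for [N] = {1..N}.\<close>

definition stiefel :: "(real^'c^'r) set" where
  "stiefel = {Q. transpose Q ** Q = mat 1}"

definition minor :: "real^('c::{finite,linorder})^('r::{finite,linorder}) \<Rightarrow> 'r set \<Rightarrow> 'c set \<Rightarrow> real" where
  "minor A S T =
     (let k = card S; xs = sorted_list_of_set S; ys = sorted_list_of_set T in
      \<Sum>p | p permutes {..<k}. of_int (sign p) * (\<Prod>i<k. A $ (xs ! i) $ (ys ! (p i))))"

text \<open>Uniform (Haar) probability measure on the Stiefel manifold: a Borel probability
  measure concentrated on the Stiefel set, invariant under left multiplication by
  orthogonal s x s and right multiplication by orthogonal r x r matrices.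
  (Such a measure exists and is unique.)\<close>
definition stiefel_haar :: "(real^('c::finite)^('r::finite)) measure \<Rightarrow> bool" where
  "stiefel_haar M \<longleftrightarrow>
     prob_space M \<and> sets M = sets borel \<and> (AE Q in M. Q \<in> stiefel) \<and>
     (\<forall>W::real^'r^'r. orthogonal_matrix W \<longrightarrow> distr M M (\<lambda>Q. W ** Q) = M) \<and>
     (\<forall>R::real^'c^'c. orthogonal_matrix R \<longrightarrow> distr M M (\<lambda>Q. Q ** R) = M)"

end

theory Submission
  imports Defs
begin

text \<open>Left multiplication by the reflection flipping the sign of row \<open>a\<close> preserves the Haar
  measure and changes the sign of \<open>[Q]\<^sub>S\<^sub>,\<^sub>T [Q]\<^sub>U\<^sub>,\<^sub>V\<close> whenever \<open>a\<close> lies in exactly one of \<open>S\<close>, \<open>U\<close>,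
  so the mixed moments vanish unless \<open>S = U\<close>; column reflections give \<open>T = V\<close> in the same way.
  Row permutations show that \<open>E [Q]\<^sub>S\<^sub>,\<^sub>T\<^sup>2\<close> does not depend on \<open>S\<close>, and by Cauchy-Binet the squares
  \<open>[Q]\<^sub>S\<^sub>,\<^sub>T\<^sup>2\<close> over all \<open>i\<close>-subsets \<open>S\<close> sum to the Gram determinant of the orthonormal columns
  \<open>T\<close>, which is 1. Hence each of the \<open>s choose i\<close> equal expectations is \<open>1 / (s choose i)\<close>.\<close>

section \<open>Leibniz determinants and the Cauchy-Binet formula\<close>

definition leibniz_det :: "nat \<Rightarrow> (nat \<Rightarrow> nat \<Rightarrow> 'a::comm_ring_1) \<Rightarrow> 'a" where
  "leibniz_det k B = (\<Sum>p | p permutes {..<k}. of_int (sign p) * (\<Prod>i<k. B i (p i)))"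

lemma permutes_lessThan_less: "p permutes {..<k} \<Longrightarrow> i < k \<Longrightarrow> p i < k"
  using permutes_in_image by fastforce

lemma leibniz_det_cong:
  assumes "\<And>i j. i < k \<Longrightarrow> j < k \<Longrightarrow> B i j = B' i j"
  shows "leibniz_det k B = leibniz_det k B'"
  unfolding leibniz_det_def
  by (intro sum.cong refl arg_cong2[where f = "(*)"] prod.cong)
     (auto simp: assms permutes_lessThan_less)

lemma leibniz_det_identity: "leibniz_det k (\<lambda>i j. if i = j then 1 else 0) = (1::'a::comm_ring_1)"
proof -
  have "of_int (sign p) * (\<Prod>i<k. if i = p i then 1 else 0) = (if p = id then 1 else (0::'a))"
    if p: "p permutes {..<k}" for p :: "nat \<Rightarrow> nat"
  proof (cases "p = id")
    case False
    then obtain x where "p x \<noteq> x" by (auto simp: fun_eq_iff)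
    moreover from this have "x < k" using p by (auto simp: permutes_def)
    ultimately have "(\<Prod>i<k. if i = p i then 1 else 0) = (0::'a)"
      by (intro prod_zero) (auto intro!: bexI[of _ x])
    with False show ?thesis by (simp only: mult_zero_right if_False)
  qed (simp add: sign_id)
  then have "leibniz_det k (\<lambda>i j. if i = j then 1 else 0) =
      (\<Sum>p | p permutes {..<k}. if p = id then 1 else (0::'a))"
    unfolding leibniz_det_def by (intro sum.cong) auto
  also have "\<dots> = 1"
    by (simp add: sum.delta finite_permutations permutes_id)
  finally show ?thesis .
qed

lemma leibniz_det_permute_rows:
  assumes t: "t permutes {..<k}"
  shows "leibniz_det k (\<lambda>i. B (t i)) = of_int (sign t) * leibniz_det k B"
proof -
  have "leibniz_det k (\<lambda>i. B (t i)) =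
      (\<Sum>q | q permutes {..<k}. of_int (sign (q \<circ> t)) * (\<Prod>i<k. B (t i) ((q \<circ> t) i)))"
    unfolding leibniz_det_def by (rule sum_permutations_compose_right[OF t])
  also have "\<dots> = (\<Sum>q | q permutes {..<k}. of_int (sign t) * (of_int (sign q) * (\<Prod>i<k. B i (q i))))"
  proof (rule sum.cong[OF refl])
    fix q assume "q \<in> {q. q permutes {..<k}}"
    then have "sign (q \<circ> t) = sign q * sign t"
      using t by (intro sign_compose) (auto intro: permutation_permutes[THEN iffD2])
    moreover have "(\<Prod>i<k. B (t i) (q (t i))) = (\<Prod>i<k. B i (q i))"
      using prod.permute[OF t, of "\<lambda>m. B m (q m)"] by (simp add: comp_def)
    ultimately show "of_int (sign (q \<circ> t)) * (\<Prod>i<k. B (t i) ((q \<circ> t) i)) =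
        of_int (sign t) * (of_int (sign q) * (\<Prod>i<k. B i (q i)))"
      by simp
  qed
  finally show ?thesis
    unfolding leibniz_det_def by (simp add: sum_distrib_left)
qed

lemma leibniz_det_identical_rows:
  fixes B :: "nat \<Rightarrow> nat \<Rightarrow> 'a::{idom,ring_char_0}"
  assumes "a < k" "b < k" "a \<noteq> b" "B a = B b"
  shows "leibniz_det k B = 0"
proof -
  let ?t = "Transposition.transpose a b"
  have "?t permutes {..<k}" using assms by (simp add: permutes_swap_id)
  moreover have "(\<lambda>i. B (?t i)) = B" using assms by (auto simp: Transposition.transpose_def)
  ultimately have "leibniz_det k B = - leibniz_det k B"
    using leibniz_det_permute_rows[of ?t k B] \<open>a \<noteq> b\<close> by (simp add: sign_swap_id)
  then show ?thesis by simp
qed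

lemma leibniz_det_transpose:
  "leibniz_det k (\<lambda>i j. B j i) = leibniz_det k B"
proof -
  have "leibniz_det k (\<lambda>i j. B j i) =
      (\<Sum>p | p permutes {..<k}. of_int (sign (inv p)) * (\<Prod>i<k. B (inv p i) i))"
    unfolding leibniz_det_def by (rule sum_permutations_inverse)
  also have "\<dots> = leibniz_det k B"
    unfolding leibniz_det_def
  proof (rule sum.cong[OF refl])
    fix p assume "p \<in> {p. p permutes {..<k}}"
    then have p: "p permutes {..<k}" by simp
    then have "sign (inv p) = sign p"
      by (intro sign_inverse) (auto intro: permutation_permutes[THEN iffD2])
    moreover have "(\<Prod>i<k. B (inv p i) i) = (\<Prod>i<k. B i (p i))"
      using prod.permutes_inv[OF p, of "\<lambda>a b. B b a"] by simp
    ultimately show "of_int (sign (inv p)) * (\<Prod>i<k. B (inv p i) i) = of_int (sign p) * (\<Prod>i<k. B i (p i))"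
      by simp
  qed
  finally show ?thesis .
qed

lemma leibniz_det_scale_rows: "leibniz_det k (\<lambda>i j. c i * B i j) = (\<Prod>i<k. c i) * leibniz_det k B"
  unfolding leibniz_det_def by (simp add: prod.distrib sum_distrib_left mult_ac)

lemma leibniz_det_scale_cols: "leibniz_det k (\<lambda>i j. B i j * c j) = (\<Prod>j<k. c j) * leibniz_det k B"
proof -
  have "leibniz_det k (\<lambda>i j. B i j * c j) = leibniz_det k (\<lambda>i j. c i * B j i)"
    using leibniz_det_transpose[of k "\<lambda>i j. c i * B j i"] by (simp add: mult.commute)
  then show ?thesis
    using leibniz_det_scale_rows[of k c "\<lambda>i j. B j i"] leibniz_det_transpose[of k B] by simp
qed

lemma abs_leibniz_det_le_fact:
  fixes B :: "nat \<Rightarrow> nat \<Rightarrow> real"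
  assumes "\<And>i j. i < k \<Longrightarrow> j < k \<Longrightarrow> \<bar>B i j\<bar> \<le> 1"
  shows "\<bar>leibniz_det k B\<bar> \<le> fact k"
proof -
  have "\<bar>leibniz_det k B\<bar> \<le> (\<Sum>p | p permutes {..<k}. \<bar>of_int (sign p) * (\<Prod>i<k. B i (p i))\<bar>)"
    unfolding leibniz_det_def by (rule sum_abs)
  also have "\<dots> \<le> (\<Sum>p | p permutes {..<k}. 1)"
  proof (rule sum_mono)
    fix p assume "p \<in> {p. p permutes {..<k}}"
    then have "(\<Prod>i<k. \<bar>B i (p i)\<bar>) \<le> 1"
      by (intro prod_le_1) (auto simp: assms permutes_lessThan_less)
    then show "\<bar>of_int (sign p) * (\<Prod>i<k. B i (p i))\<bar> \<le> 1"
      by (simp add: abs_mult abs_prod sign_def)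
  qed
  also have "\<dots> = fact k"
    by (simp add: card_permutations)
  finally show ?thesis .
qed

definition select_rows :: "('a::linorder \<Rightarrow> nat \<Rightarrow> 'b) \<Rightarrow> 'a set \<Rightarrow> nat \<Rightarrow> nat \<Rightarrow> 'b" where
  "select_rows C S = (\<lambda>i. C (sorted_list_of_set S ! i))"

lemma sum_bijections_leibniz_det:
  fixes A B :: "'a::linorder \<Rightarrow> nat \<Rightarrow> 'b::comm_ring_1"
  assumes S: "finite S" "card S = k"
  shows "(\<Sum>f | f \<in> {..<k} \<rightarrow>\<^sub>E UNIV \<and> bij_betw f {..<k} S.
            (\<Prod>i<k. A (f i) i) * leibniz_det k (\<lambda>i. B (f i)))
         = leibniz_det k (select_rows A S) * leibniz_det k (select_rows B S)"
proof -
  define xs where "xs = sorted_list_of_set S"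
  have xs: "bij_betw ((!) xs) {..<k} S"
    using S by (auto simp: xs_def intro!: bij_betw_nth)
  define g where "g = inv_into {..<k} ((!) xs)"
  have g: "bij_betw g S {..<k}"
    unfolding g_def by (rule bij_betw_inv_into[OF xs])
  define F where "F = {f. f \<in> {..<k} \<rightarrow>\<^sub>E UNIV \<and> bij_betw f {..<k} S}"
  define to_fun where "to_fun t = restrict (\<lambda>i. xs ! t i) {..<k}" for t :: "nat \<Rightarrow> nat"
  define to_perm where "to_perm f i = (if i < k then g (f i) else i)" for f :: "nat \<Rightarrow> 'a" and i
  let ?h = "\<lambda>f. (\<Prod>i<k. A (f i) i) * leibniz_det k (\<lambda>i. B (f i))"
  have to_fun: "to_fun t \<in> F" "to_perm (to_fun t) = t" if t: "t permutes {..<k}" for t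
  proof -
    have "bij_betw (\<lambda>i. xs ! t i) {..<k} S"
      using bij_betw_trans[OF permutes_imp_bij[OF t] xs] by (simp add: comp_def)
    then have "bij_betw (to_fun t) {..<k} S"
      by (rule bij_betw_cong[THEN iffD1, rotated]) (simp add: to_fun_def)
    then show "to_fun t \<in> F"
      unfolding F_def to_fun_def by simp
    show "to_perm (to_fun t) = t"
    proof
      fix i show "to_perm (to_fun t) i = t i"
        using t bij_betw_inv_into_left[OF xs]
        by (cases "i < k") (simp_all add: to_perm_def to_fun_def g_def permutes_lessThan_less permutes_not_in)
    qed
  qed
  have to_perm: "to_perm f permutes {..<k}" "to_fun (to_perm f) = f" if f: "f \<in> F" for f
  proof -
    from f have f_PiE: "f \<in> {..<k} \<rightarrow>\<^sub>E UNIV" and f_bij: "bij_betw f {..<k} S"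
      unfolding F_def by auto
    have "bij_betw (\<lambda>i. g (f i)) {..<k} {..<k}"
      using bij_betw_trans[OF f_bij g] by (simp add: comp_def)
    then have "bij_betw (to_perm f) {..<k} {..<k}"
      by (rule bij_betw_cong[THEN iffD1, rotated]) (simp add: to_perm_def)
    then show "to_perm f permutes {..<k}"
      by (rule bij_imp_permutes) (simp_all add: to_perm_def)
    show "to_fun (to_perm f) = f"
    proof
      fix i show "to_fun (to_perm f) i = f i"
      proof (cases "i < k")
        case True
        then have "f i \<in> S" using bij_betwE[OF f_bij] by simp
        then show ?thesis
          using True bij_betw_inv_into_right[OF xs] by (simp add: to_perm_def to_fun_def g_def)
      qed (use PiE_arb[OF f_PiE, of i] in \<open>simp add: to_fun_def\<close>)
    qed
  qed
  have "sum ?h F = (\<Sum>t | t permutes {..<k}. ?h (to_fun t))"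
    by (rule sum.reindex_bij_witness[where i = to_fun and j = to_perm]) (use to_fun to_perm in auto)
  also have "\<dots> = (\<Sum>t | t permutes {..<k}.
      leibniz_det k (select_rows B S) * (of_int (sign t) * (\<Prod>i<k. select_rows A S (t i) i)))"
  proof (rule sum.cong[OF refl])
    fix t assume "t \<in> {t. t permutes {..<k}}"
    then have t: "t permutes {..<k}" by simp
    have "leibniz_det k (\<lambda>i. B (to_fun t i)) = leibniz_det k (\<lambda>i. select_rows B S (t i))"
      by (rule leibniz_det_cong) (simp add: to_fun_def select_rows_def xs_def)
    moreover have "(\<Prod>i<k. A (to_fun t i) i) = (\<Prod>i<k. select_rows A S (t i) i)"
      by (simp add: to_fun_def select_rows_def xs_def)
    ultimately show "?h (to_fun t) = leibniz_det k (select_rows B S) *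
        (of_int (sign t) * (\<Prod>i<k. select_rows A S (t i) i))"
      by (simp add: leibniz_det_permute_rows[OF t])
  qed
  also have "\<dots> = leibniz_det k (select_rows B S) * leibniz_det k (\<lambda>i j. select_rows A S j i)"
    by (simp add: leibniz_det_def sum_distrib_left)
  finally show ?thesis
    using leibniz_det_transpose[of k "select_rows A S"] by (simp add: F_def mult.commute)
qed

lemma cauchy_binet:
  fixes A B :: "'a::{finite,linorder} \<Rightarrow> nat \<Rightarrow> 'b::{idom,ring_char_0}"
  shows "leibniz_det k (\<lambda>i j. \<Sum>a\<in>UNIV. A a i * B a j) =
    (\<Sum>S | card S = k. leibniz_det k (select_rows A S) * leibniz_det k (select_rows B S))"
proof -
  define F where "F = {..<k} \<rightarrow>\<^sub>E (UNIV::'a set)"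
  let ?h = "\<lambda>f. (\<Prod>i<k. A (f i) i) * leibniz_det k (\<lambda>i. B (f i))"
  have "leibniz_det k (\<lambda>i j. \<Sum>a\<in>UNIV. A a i * B a j) =
      (\<Sum>p | p permutes {..<k}. of_int (sign p) * (\<Sum>f\<in>F. \<Prod>i<k. A (f i) i * B (f i) (p i)))"
    unfolding leibniz_det_def F_def by (simp add: prod_sum_PiE)
  also have "\<dots> = sum ?h F"
    unfolding leibniz_det_def
    by (simp add: sum_distrib_left sum.swap[of _ F] prod.distrib mult.left_commute)
  also have "\<dots> = sum ?h {f \<in> F. inj_on f {..<k}}"
  proof (rule sum.mono_neutral_right)
    show "\<forall>f\<in>F - {f \<in> F. inj_on f {..<k}}. ?h f = 0"
    proof
      fix f assume "f \<in> F - {f \<in> F. inj_on f {..<k}}"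
      then obtain a b where "a < k" "b < k" "a \<noteq> b" "f a = f b"
        unfolding inj_on_def by auto
      then show "?h f = 0"
        using leibniz_det_identical_rows[of a k b "\<lambda>i. B (f i)"] by simp
    qed
  qed (auto simp: F_def finite_PiE)
  also have "\<dots> = (\<Sum>S | card S = k. sum ?h {f \<in> {f \<in> F. inj_on f {..<k}}. f ` {..<k} = S})"
  proof (rule sum.group[symmetric])
    show "(\<lambda>f. f ` {..<k}) ` {f \<in> F. inj_on f {..<k}} \<subseteq> {S. card S = k}"
      by (intro image_subsetI) (simp add: card_image)
  qed (simp_all add: F_def finite_PiE)
  also have "\<dots> = (\<Sum>S | card S = k. leibniz_det k (select_rows A S) * leibniz_det k (select_rows B S))"
  proof (rule sum.cong[OF refl])
    fix S :: "'a set" assume "S \<in> {S. card S = k}"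
    moreover have "{f \<in> {f \<in> F. inj_on f {..<k}}. f ` {..<k} = S} =
        {f. f \<in> {..<k} \<rightarrow>\<^sub>E UNIV \<and> bij_betw f {..<k} S}"
      by (auto simp: F_def bij_betw_def)
    ultimately show "sum ?h {f \<in> {f \<in> F. inj_on f {..<k}}. f ` {..<k} = S} =
        leibniz_det k (select_rows A S) * leibniz_det k (select_rows B S)"
      using sum_bijections_leibniz_det[of S k A B] by simp
  qed
  finally show ?thesis .
qed

section \<open>Minors\<close>

lemma minor_eq_leibniz_det:
  "minor A S T = leibniz_det (card S) (\<lambda>i j. A $ (sorted_list_of_set S ! i) $ (sorted_list_of_set T ! j))"
  unfolding minor_def leibniz_det_def Let_def ..

lemma stiefel_sum_minor_squares:
  fixes Q :: "real^'n::{finite,linorder}^'m::{finite,linorder}"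
  assumes Q: "Q \<in> stiefel" and T: "card T = k"
  shows "(\<Sum>S | card S = k. (minor Q S T)\<^sup>2) = 1"
proof -
  define ys where "ys = sorted_list_of_set T"
  define C where "C a j = Q $ a $ (ys ! j)" for a j
  have gram: "(\<Sum>a\<in>UNIV. C a i * C a j) = (if i = j then 1 else 0)" if "i < k" "j < k" for i j
  proof -
    have "(\<Sum>a\<in>UNIV. C a i * C a j) = (transpose Q ** Q) $ (ys ! i) $ (ys ! j)"
      by (simp add: C_def matrix_matrix_mult_def transpose_def)
    also have "\<dots> = (if ys ! i = ys ! j then 1 else 0)"
      using Q by (simp add: stiefel_def mat_def)
    also have "\<dots> = (if i = j then 1 else 0)"
      using that T by (simp add: ys_def nth_eq_iff_index_eq)
    finally show ?thesis .
  qed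
  have "1 = leibniz_det k (\<lambda>i j. if i = j then 1 else (0::real))"
    by (simp add: leibniz_det_identity)
  also have "\<dots> = leibniz_det k (\<lambda>i j. \<Sum>a\<in>UNIV. C a i * C a j)"
    by (rule leibniz_det_cong) (simp add: gram)
  also have "\<dots> = (\<Sum>S | card S = k. (leibniz_det k (select_rows C S))\<^sup>2)"
    by (simp add: cauchy_binet power2_eq_square)
  also have "\<dots> = (\<Sum>S | card S = k. (minor Q S T)\<^sup>2)"
    by (intro sum.cong refl) (simp add: minor_eq_leibniz_det select_rows_def C_def ys_def)
  finally show ?thesis ..
qed

lemma continuous_on_minor: "continuous_on UNIV (\<lambda>Q. minor Q S T)"
  unfolding minor_eq_leibniz_det leibniz_det_def
  by (intro continuous_intros continuous_on_component continuous_on_id)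

lemma borel_measurable_minor: "(\<lambda>Q. minor Q S T) \<in> borel_measurable borel"
  by (rule borel_measurable_continuous_onI[OF continuous_on_minor])

lemma abs_stiefel_entry_le_1:
  assumes "Q \<in> stiefel"
  shows "\<bar>Q $ a $ b\<bar> \<le> 1"
proof -
  have "(Q $ a $ b)\<^sup>2 \<le> (\<Sum>x\<in>UNIV. (Q $ x $ b)\<^sup>2)"
    by (rule member_le_sum) auto
  also have "\<dots> = (transpose Q ** Q) $ b $ b"
    by (simp add: matrix_matrix_mult_def transpose_def power2_eq_square)
  also have "\<dots> = 1"
    using assms by (simp add: stiefel_def mat_def)
  finally show ?thesis
    by (simp add: abs_square_le_1)
qed

lemma abs_stiefel_minor_le_fact: "Q \<in> stiefel \<Longrightarrow> \<bar>minor Q S T\<bar> \<le> fact (card S)"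
  unfolding minor_eq_leibniz_det by (intro abs_leibniz_det_le_fact abs_stiefel_entry_le_1)

definition signed_perm_mat :: "('n \<Rightarrow> 'n) \<Rightarrow> ('n \<Rightarrow> real) \<Rightarrow> real^'n^'n" where
  "signed_perm_mat \<sigma> d = (\<chi> a b. if b = \<sigma> a then d a else 0)"

lemma signed_perm_mat_mult_nth: "(signed_perm_mat \<sigma> d ** Q) $ a $ c = d a * Q $ \<sigma> a $ c"
  by (simp add: matrix_matrix_mult_def signed_perm_mat_def if_distrib if_distribR sum.delta' cong: if_cong)

lemma mult_signed_perm_mat_id_nth: "(Q ** signed_perm_mat id d) $ a $ c = Q $ a $ c * d c"
  by (simp add: matrix_matrix_mult_def signed_perm_mat_def if_distrib if_distribR sum.delta cong: if_cong)

lemma orthogonal_signed_perm_mat: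
  assumes \<sigma>: "bij \<sigma>" and d: "\<And>a. \<bar>d a\<bar> = 1"
  shows "orthogonal_matrix (signed_perm_mat \<sigma> d)"
  unfolding orthogonal_matrix
proof (simp add: vec_eq_iff, intro allI)
  fix i j
  have "(transpose (signed_perm_mat \<sigma> d) ** signed_perm_mat \<sigma> d) $ i $ j =
      (\<Sum>a\<in>UNIV. (if i = \<sigma> a then d a else 0) * (if j = \<sigma> a then d a else 0))"
    by (simp add: matrix_matrix_mult_def transpose_def signed_perm_mat_def)
  also have "\<dots> = (\<Sum>a\<in>UNIV. if a = inv \<sigma> i then (if j = i then 1 else 0) else 0)"
  proof (rule sum.cong[OF refl])
    fix a
    have "i = \<sigma> a \<longleftrightarrow> a = inv \<sigma> i"
      using \<sigma> by (metis bij_inv_eq_iff)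
    moreover have "d a * d a = 1"
      using d[of a] by (metis abs_mult_self_eq mult_1_right)
    ultimately show "(if i = \<sigma> a then d a else 0) * (if j = \<sigma> a then d a else 0) =
        (if a = inv \<sigma> i then if j = i then 1 else 0 else 0)"
      by auto
  qed
  finally show "(transpose (signed_perm_mat \<sigma> d) ** signed_perm_mat \<sigma> d) $ i $ j = mat 1 $ i $ j"
    by (simp add: mat_def)
qed

lemma prod_sorted_list_of_set:
  "finite S \<Longrightarrow> (\<Prod>i<card S. d (sorted_list_of_set S ! i)) = (\<Prod>x\<in>S. d x)"
  using prod.reindex_bij_betw[OF bij_betw_nth[of "sorted_list_of_set S" "{..<card S}" S], of d]
  by simp

lemma minor_signed_perm_mat_id_mult:
  "minor (signed_perm_mat id d ** Q) S T = (\<Prod>a\<in>S. d a) * minor Q S T"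
  unfolding minor_eq_leibniz_det signed_perm_mat_mult_nth id_apply leibniz_det_scale_rows
  by (simp add: prod_sorted_list_of_set)

text \<open>\<^const>\<open>minor\<close> takes its size from the row set, so the column set must have the same cardinality.\<close>

lemma minor_mult_signed_perm_mat_id:
  assumes "card T = card S"
  shows "minor (Q ** signed_perm_mat id d) S T = (\<Prod>b\<in>T. d b) * minor Q S T"
  unfolding minor_eq_leibniz_det mult_signed_perm_mat_id_nth leibniz_det_scale_cols
  using prod_sorted_list_of_set[of T d] assms by simp

lemma minor_signed_perm_mat_mult:
  assumes "\<And>i. i < card S \<Longrightarrow> \<sigma> (sorted_list_of_set S ! i) = sorted_list_of_set S' ! i"
    and "card S' = card S"
  shows "minor (signed_perm_mat \<sigma> (\<lambda>_. 1) ** Q) S T = minor Q S' T"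
  unfolding minor_eq_leibniz_det signed_perm_mat_mult_nth \<open>card S' = card S\<close>
  by (rule leibniz_det_cong) (simp add: assms)

lemma ex_bij_sorted_list_of_set:
  fixes S S' :: "'a::{finite,linorder} set"
  assumes "card S' = card S"
  obtains \<sigma> where "bij \<sigma>" "\<And>i. i < card S \<Longrightarrow> \<sigma> (sorted_list_of_set S ! i) = sorted_list_of_set S' ! i"
proof -
  define xs xs' where "xs = sorted_list_of_set S" and "xs' = sorted_list_of_set S'"
  have xs: "bij_betw ((!) xs) {..<card S} S" and xs': "bij_betw ((!) xs') {..<card S} S'"
    using assms by (auto simp: xs_def xs'_def intro!: bij_betw_nth)
  define \<sigma>\<^sub>1 where "\<sigma>\<^sub>1 = (\<lambda>x. xs' ! inv_into {..<card S} ((!) xs) x)"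
  have \<sigma>\<^sub>1: "bij_betw \<sigma>\<^sub>1 S S'"
    using bij_betw_trans[OF bij_betw_inv_into[OF xs] xs'] by (simp add: comp_def \<sigma>\<^sub>1_def)
  obtain \<sigma>\<^sub>2 where \<sigma>\<^sub>2: "bij_betw \<sigma>\<^sub>2 (- S) (- S')"
    using assms finite_same_card_bij[of "- S" "- S'"] by (auto simp: Compl_eq_Diff_UNIV card_Diff_subset)
  define \<sigma> where "\<sigma> x = (if x \<in> S then \<sigma>\<^sub>1 x else \<sigma>\<^sub>2 x)" for x
  have "bij_betw \<sigma> S S'"
    using \<sigma>\<^sub>1 by (rule bij_betw_cong[THEN iffD1, rotated]) (simp add: \<sigma>_def)
  moreover have "bij_betw \<sigma> (- S) (- S')"
    using \<sigma>\<^sub>2 by (rule bij_betw_cong[THEN iffD1, rotated]) (simp add: \<sigma>_def)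
  ultimately have "bij_betw \<sigma> (S \<union> - S) (S' \<union> - S')"
    by (rule bij_betw_combine) simp
  moreover have "\<sigma> (xs ! i) = xs' ! i" if "i < card S" for i
    using that bij_betwE[OF xs] bij_betw_inv_into_left[OF xs] by (simp add: \<sigma>_def \<sigma>\<^sub>1_def)
  ultimately show ?thesis
    using that unfolding xs_def xs'_def by simp
qed

section \<open>Integrals against the Stiefel-Haar measure\<close>

lemma integral_distr_invariant:
  fixes f :: "'a::topological_space \<Rightarrow> real"
  assumes M: "sets M = sets borel" and g: "g \<in> borel_measurable borel" and inv: "distr M M g = M"
    and f: "f \<in> borel_measurable borel"
  shows "(\<integral>x. f (g x) \<partial>M) = integral\<^sup>L M f"
proof -
  have "g \<in> M \<rightarrow>\<^sub>M M"
    using g by (simp only: measurable_cong_sets[OF M M])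
  moreover have "f \<in> borel_measurable M"
    using f by (simp only: measurable_cong_sets[OF M refl])
  ultimately have "(\<integral>x. f (g x) \<partial>M) = integral\<^sup>L (distr M M g) f"
    by (rule integral_distr[symmetric])
  then show ?thesis
    by (simp add: inv)
qed

lemma continuous_on_matrix_mult_left: "continuous_on UNIV (\<lambda>Q::real^'n^'m. W ** Q)"
  unfolding matrix_matrix_mult_def
  by (intro continuous_on_vec_lambda continuous_intros continuous_on_component continuous_on_id)

lemma continuous_on_matrix_mult_right: "continuous_on UNIV (\<lambda>Q::real^'n^'m. Q ** R)"
  unfolding matrix_matrix_mult_def
  by (intro continuous_on_vec_lambda continuous_intros continuous_on_component continuous_on_id)

lemma integral_stiefel_haar_mult_left:
  fixes M :: "(real^'n::finite^'m::finite) measure" and f :: "real^'n^'m \<Rightarrow> real"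
  assumes "stiefel_haar M" "orthogonal_matrix W" "f \<in> borel_measurable borel"
  shows "(\<integral>Q. f (W ** Q) \<partial>M) = integral\<^sup>L M f"
proof (rule integral_distr_invariant[where g = "\<lambda>Q. W ** Q"])
  show "sets M = sets borel" "distr M M (\<lambda>Q. W ** Q) = M"
    using assms by (simp_all add: stiefel_haar_def)
  show "(\<lambda>Q. W ** Q) \<in> borel_measurable borel"
    by (rule borel_measurable_continuous_onI[OF continuous_on_matrix_mult_left])
qed (fact assms(3))

lemma integral_stiefel_haar_mult_right:
  fixes M :: "(real^'n::finite^'m::finite) measure" and f :: "real^'n^'m \<Rightarrow> real"
  assumes "stiefel_haar M" "orthogonal_matrix R" "f \<in> borel_measurable borel"
  shows "(\<integral>Q. f (Q ** R) \<partial>M) = integral\<^sup>L M f"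
proof (rule integral_distr_invariant[where g = "\<lambda>Q. Q ** R"])
  show "sets M = sets borel" "distr M M (\<lambda>Q. Q ** R) = M"
    using assms by (simp_all add: stiefel_haar_def)
  show "(\<lambda>Q. Q ** R) \<in> borel_measurable borel"
    by (rule borel_measurable_continuous_onI[OF continuous_on_matrix_mult_right])
qed (fact assms(3))

lemma borel_measurable_stiefel_haar:
  fixes f :: "real^'n::finite^'m::finite \<Rightarrow> real"
  assumes "stiefel_haar M" "f \<in> borel_measurable borel"
  shows "f \<in> borel_measurable M"
proof -
  have "sets M = sets borel"
    using assms(1) by (simp add: stiefel_haar_def)
  then have "borel_measurable M = (borel_measurable borel :: (_ \<Rightarrow> real) set)"
    by (rule measurable_cong_sets) simp
  with assms(2) show ?thesis
    by simp
qed

lemma integrable_stiefel_haar_minor_mult: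
  fixes M :: "(real^'n::{finite,linorder}^'m::{finite,linorder}) measure"
  assumes H: "stiefel_haar M"
  shows "integrable M (\<lambda>Q. minor Q S T * minor Q U V)"
proof (rule finite_measure.integrable_const_bound)
  show "finite_measure M"
    using H by (simp add: stiefel_haar_def prob_space_def)
  have "AE Q in M. Q \<in> stiefel"
    using H by (simp add: stiefel_haar_def)
  then show "AE Q in M. norm (minor Q S T * minor Q U V) \<le> fact (card S) * fact (card U)"
  proof eventually_elim
    case (elim Q)
    show ?case
      using abs_stiefel_minor_le_fact[OF elim, of S T] abs_stiefel_minor_le_fact[OF elim, of U V]
      by (simp add: abs_mult mult_mono)
  qed
  show "(\<lambda>Q. minor Q S T * minor Q U V) \<in> borel_measurable M"
    by (intro borel_measurable_stiefel_haar[OF H] borel_measurable_times borel_measurable_minor)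
qed

lemma integral_stiefel_haar_minor_mult_eq_0_rows:
  fixes M :: "(real^'n::{finite,linorder}^'m::{finite,linorder}) measure"
  assumes H: "stiefel_haar M" and "S \<noteq> U"
  shows "(\<integral>Q. minor Q S T * minor Q U V \<partial>M) = 0"
proof -
  obtain a where a: "a \<in> S \<longleftrightarrow> a \<notin> U"
    using \<open>S \<noteq> U\<close> by blast
  define W where "W = signed_perm_mat id (\<lambda>x. if x = a then -1 else 1)"
  have W: "orthogonal_matrix W"
    unfolding W_def by (rule orthogonal_signed_perm_mat) simp_all
  have odd: "minor (W ** Q) S T * minor (W ** Q) U V = - (minor Q S T * minor Q U V)" for Q
    using a by (simp add: W_def minor_signed_perm_mat_id_mult prod.delta)
  have "(\<integral>Q. minor Q S T * minor Q U V \<partial>M) = (\<integral>Q. minor (W ** Q) S T * minor (W ** Q) U V \<partial>M)"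
    by (rule integral_stiefel_haar_mult_left[OF H W, where f = "\<lambda>Q. minor Q S T * minor Q U V", symmetric])
       (intro borel_measurable_times borel_measurable_minor)
  also have "\<dots> = - (\<integral>Q. minor Q S T * minor Q U V \<partial>M)"
    by (simp add: odd)
  finally show ?thesis
    by simp
qed

lemma integral_stiefel_haar_minor_mult_eq_0_cols:
  fixes M :: "(real^'n::{finite,linorder}^'m::{finite,linorder}) measure"
  assumes H: "stiefel_haar M" and "T \<noteq> V" "card T = card S" "card V = card U"
  shows "(\<integral>Q. minor Q S T * minor Q U V \<partial>M) = 0"
proof -
  obtain a where a: "a \<in> T \<longleftrightarrow> a \<notin> V"
    using \<open>T \<noteq> V\<close> by blast
  define R where "R = signed_perm_mat id (\<lambda>x. if x = a then -1 else 1)"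
  have R: "orthogonal_matrix R"
    unfolding R_def by (rule orthogonal_signed_perm_mat) simp_all
  have odd: "minor (Q ** R) S T * minor (Q ** R) U V = - (minor Q S T * minor Q U V)" for Q
    using a assms(3,4) by (simp add: R_def minor_mult_signed_perm_mat_id prod.delta)
  have "(\<integral>Q. minor Q S T * minor Q U V \<partial>M) = (\<integral>Q. minor (Q ** R) S T * minor (Q ** R) U V \<partial>M)"
    by (rule integral_stiefel_haar_mult_right[OF H R, where f = "\<lambda>Q. minor Q S T * minor Q U V", symmetric])
       (intro borel_measurable_times borel_measurable_minor)
  also have "\<dots> = - (\<integral>Q. minor Q S T * minor Q U V \<partial>M)"
    by (simp add: odd)
  finally show ?thesis
    by simp
qed

lemma integral_stiefel_haar_minor_square_eq:
  fixes M :: "(real^'n::{finite,linorder}^'m::{finite,linorder}) measure"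
  assumes H: "stiefel_haar M" and "card S' = card S"
  shows "(\<integral>Q. (minor Q S' T)\<^sup>2 \<partial>M) = (\<integral>Q. (minor Q S T)\<^sup>2 \<partial>M)"
proof -
  obtain \<sigma> where "bij \<sigma>" and \<sigma>: "\<And>i. i < card S \<Longrightarrow> \<sigma> (sorted_list_of_set S ! i) = sorted_list_of_set S' ! i"
    using ex_bij_sorted_list_of_set[OF \<open>card S' = card S\<close>] by blast
  define P where "P = signed_perm_mat \<sigma> (\<lambda>_. 1)"
  have P: "orthogonal_matrix P"
    unfolding P_def using \<open>bij \<sigma>\<close> by (rule orthogonal_signed_perm_mat) simp
  have "minor (P ** Q) S T = minor Q S' T" for Q
    unfolding P_def using \<sigma> \<open>card S' = card S\<close> by (rule minor_signed_perm_mat_mult)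
  moreover have "(\<lambda>Q. (minor Q S T)\<^sup>2) \<in> borel_measurable borel"
    by (intro borel_measurable_power borel_measurable_minor)
  ultimately show ?thesis
    using integral_stiefel_haar_mult_left[OF H P, where f = "\<lambda>Q. (minor Q S T)\<^sup>2"] by simp
qed

lemma integral_stiefel_haar_minor_square:
  fixes M :: "(real^'n::{finite,linorder}^'m::{finite,linorder}) measure"
  assumes H: "stiefel_haar M" and "card T = card S"
  shows "(\<integral>Q. (minor Q S T)\<^sup>2 \<partial>M) = 1 / real (CARD('m) choose card S)"
proof -
  define k where "k = card S"
  define c where "c = (\<integral>Q. (minor Q S T)\<^sup>2 \<partial>M)"
  have "real (CARD('m) choose k) * c = (\<Sum>S' \<in> {S' :: 'm set. card S' = k}. c)"
    using n_subsets[of "UNIV :: 'm set" k] by simp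
  also have "\<dots> = (\<Sum>S' | card S' = k. \<integral>Q. (minor Q S' T)\<^sup>2 \<partial>M)"
  proof (rule sum.cong[OF refl])
    fix S' assume "S' \<in> {S' :: 'm set. card S' = k}"
    then show "c = (\<integral>Q. (minor Q S' T)\<^sup>2 \<partial>M)"
      using integral_stiefel_haar_minor_square_eq[OF H, of S' S T] by (simp add: c_def k_def)
  qed
  also have "\<dots> = (\<integral>Q. (\<Sum>S' | card S' = k. (minor Q S' T)\<^sup>2) \<partial>M)"
    using integrable_stiefel_haar_minor_mult[OF H] by (simp add: power2_eq_square)
  also have "\<dots> = (\<integral>Q. 1 \<partial>M)"
  proof (rule integral_cong_AE)
    have "AE Q in M. Q \<in> stiefel"
      using H by (simp add: stiefel_haar_def)
    then show "AE Q in M. (\<Sum>S' | card S' = k. (minor Q S' T)\<^sup>2) = 1"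
      by eventually_elim (simp add: stiefel_sum_minor_squares \<open>card T = card S\<close> k_def)
  qed (intro borel_measurable_stiefel_haar[OF H] borel_measurable_sum borel_measurable_power
      borel_measurable_minor borel_measurable_const)+
  also have "\<dots> = 1"
    using H by (simp add: stiefel_haar_def prob_space.prob_space)
  finally have "real (CARD('m) choose k) * c = 1" .
  moreover from this have "real (CARD('m) choose k) \<noteq> 0"
    by (metis mult_zero_left zero_neq_one)
  ultimately show ?thesis
    by (simp add: c_def k_def field_simps)
qed

theorem mainTheorem7:
  fixes M :: "(real^('r::{finite,linorder})^('s::{finite,linorder})) measure"
    and S U :: "'s set" and T V :: "'r set" and i l :: nat
  assumes "CARD('r) \<le> CARD('s)"
    and "stiefel_haar M"
    and "card S = i" and "card T = i"
    and "card U = l" and "card V = l"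
  shows "(\<integral>Q. minor Q S T * minor Q U V \<partial>M) =
           1 / real (CARD('s) choose i) * (if S = U then 1 else 0) * (if T = V then 1 else 0)"
proof (cases "S = U \<and> T = V")
  case True
  then show ?thesis
    using integral_stiefel_haar_minor_square[OF assms(2), of T S] assms(3,4)
    by (simp add: power2_eq_square)
next
  case False
  then consider "S \<noteq> U" | "T \<noteq> V"
    by blast
  then have "(\<integral>Q. minor Q S T * minor Q U V \<partial>M) = 0"
  proof cases
    case 1
    then show ?thesis
      by (rule integral_stiefel_haar_minor_mult_eq_0_rows[OF assms(2)])
  next
    case 2
    then show ?thesis
      using assms(3-6) by (intro integral_stiefel_haar_minor_mult_eq_0_cols[OF assms(2)]) simp_all
  qed
  with False show ?thesis
    by auto
qed

end
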